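(* In the Pathfinder game (started from the position consisting of the root constituent $\delta^{(0)} = \top$), neither player has a winning strategy, i.e. no strategy of either player guarantees a win against every strategy of the opponent.
   Context: $L$ is a first-order language without equality with finitely many predicate symbols and no function or constant symbols. For $d \in \mathbb{N}$, $\Delta^{(d)}$ is the finite set of Hintikka constituents of depth $d$ with no free variables ($\Delta^{(0)} = \{\top\}$, which is consistent); a constituent is consistent iff satisfiable, and every consistent constituent has a consistent depth-$(d+1)$ expansion. $\mathrm{expand}(1,\delta^{(d)})\subseteq\Delta^{(d+1)}$ denotes the expansions of $\delta^{(d)}$. Refinement tree: on $\Delta = \bigcup_d \Delta^{(d)}$ put an edge from each $\delta^{(d)}$ to each member of $\mathrm{expand}(1,\delta^{(d)})$, keeping a constituent lying in several depth-$d$ expansions as child of only one of them (such shared constituents are inconsistent). Pathfinder is a two-player alternating-turn game. Positions are finite sequences $\delta^{(0)}\delta^{(1)}\cdots\delta^{(d)}$ with each $\delta^{(k+1)}$ a child of $\delta^{(k)}$, possibly followed by a terminal symbol $*$. The player to move at a non-terminal position ending in $\delta^{(d)}$ either (select) appends a child $\delta^{(d+1)}$ of $\delta^{(d)}$ and passes the turn, or (challenge) appends $*$, ending the game; after a challenge on $\delta^{(d)}$, the challenging player wins if $\delta^{(d)}$ is inconsistent and the other player wins if $\delta^{(d)}$ is consistent. A play that never ends has no winner. *)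

theory Defs
  imports Main "HOL-Library.FSet"
begin

text \<open>Variables are x_0, x_1, ...; an atom is a pair (P, args) with args a list
  of variable indices of length ar P.  No equality, no function/constant symbols.\<close>

text \<open>A constituent
  with k free variables x_0..x_(k-1) of depth d is  Cst A S  meaning
    (conjunction of the atoms "new at k", positive if in A, negated otherwise)
    \<and> (\<And>_(c\<in>S) \<exists>x_k. c) \<and> \<forall>x_k. \<Or>_(c\<in>S) c
  where S is a finite set of constituents of depth d-1 with k+1 free variables
  (for d = 0 only the atomic part is present).\<close>

datatype 'p cst = Cst "('p \<times> nat list) set" "'p cst fset"

text \<open>Atoms in the variables x_0..x_(k-1) that actually contain x_(k-1)
  (the atoms added when the k-th variable is introduced).\<close>
definition natoms :: "('p \<Rightarrow> nat) \<Rightarrow> nat \<Rightarrow> ('p \<times> nat list) set" where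
  "natoms ar k = {(P, args). length args = ar P \<and> set args \<subseteq> {..<k}
                      \<and> \<not> set args \<subseteq> {..<k - 1}}"

fun is_cst :: "('p \<Rightarrow> nat) \<Rightarrow> nat \<Rightarrow> nat \<Rightarrow> 'p cst \<Rightarrow> bool" where
  "is_cst ar k 0 (Cst A S) \<longleftrightarrow> A \<subseteq> natoms ar k \<and> S = {||}"
| "is_cst ar k (Suc d) (Cst A S) \<longleftrightarrow> A \<subseteq> natoms ar k \<and> (\<forall>c. c |\<in>| S \<longrightarrow> is_cst ar (Suc k) d c)"

definition Delta :: "('p \<Rightarrow> nat) \<Rightarrow> nat \<Rightarrow> 'p cst set" where
  "Delta ar d = {c. is_cst ar 0 d c}"

definition top_cst :: "'p cst" where "top_cst = Cst {} {||}"

text \<open>Satisfaction of a depth-d constituent in a structure with (nonempty) domain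
  D and interpretation I, under the assignment x_i := vs ! i (k = length vs).\<close>
fun sat :: "('p \<Rightarrow> nat) \<Rightarrow> nat set \<Rightarrow> ('p \<Rightarrow> nat list \<Rightarrow> bool) \<Rightarrow> nat list
             \<Rightarrow> nat \<Rightarrow> 'p cst \<Rightarrow> bool" where
  "sat ar D I vs 0 (Cst A S) \<longleftrightarrow>
     (\<forall>(P, args)\<in>natoms ar (length vs). I P (map (\<lambda>i. vs ! i) args) \<longleftrightarrow> (P, args) \<in> A)"
| "sat ar D I vs (Suc d) (Cst A S) \<longleftrightarrow>
     (\<forall>(P, args)\<in>natoms ar (length vs). I P (map (\<lambda>i. vs ! i) args) \<longleftrightarrow> (P, args) \<in> A)
     \<and> (\<forall>c. c |\<in>| S \<longrightarrow> (\<exists>x\<in>D. sat ar D I (vs @ [x]) d c))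
     \<and> (\<forall>x\<in>D. \<exists>c. c |\<in>| S \<and> sat ar D I (vs @ [x]) d c)"

text \<open>Consistency of a closed depth-d constituent = satisfiability (by downward
  Loewenheim-Skolem, countable domains, here subsets of nat, suffice).\<close>
definition consistent :: "('p \<Rightarrow> nat) \<Rightarrow> nat \<Rightarrow> 'p cst \<Rightarrow> bool" where
  "consistent ar d c \<longleftrightarrow> (\<exists>(D::nat set) I. D \<noteq> {} \<and> sat ar D I [] d c)"

fun trunc :: "nat \<Rightarrow> 'p cst \<Rightarrow> 'p cst" where
  "trunc 0 (Cst A S) = Cst A {||}"
| "trunc (Suc n) (Cst A S) = Cst A (trunc n |`| S)"

definition expand1 :: "('p \<Rightarrow> nat) \<Rightarrow> nat \<Rightarrow> 'p cst \<Rightarrow> 'p cst set" where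
  "expand1 ar d \<delta> = {c \<in> Delta ar (Suc d). trunc d c = \<delta>}"

datatype 'p move = Select "'p cst" | Challenge

type_synonym 'p strategy = "'p cst list \<Rightarrow> 'p move"

definition legal :: "('p \<Rightarrow> nat) \<Rightarrow> 'p strategy \<Rightarrow> bool" where
  "legal ar \<sigma> \<longleftrightarrow> (\<forall>pos c. pos \<noteq> [] \<longrightarrow> \<sigma> pos = Select c
                       \<longrightarrow> c \<in> expand1 ar (length pos - 1) (last pos))"

primrec play :: "'p strategy \<Rightarrow> 'p strategy \<Rightarrow> nat \<Rightarrow> 'p cst list" where
  "play s0 s1 0 = [top_cst]"
| "play s0 s1 (Suc n) = (case (if even n then s0 else s1) (play s0 s1 n) of
                           Select c \<Rightarrow> play s0 s1 n @ [c]
                         | Challenge \<Rightarrow> play s0 s1 n)"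

definition mv :: "'p strategy \<Rightarrow> 'p strategy \<Rightarrow> nat \<Rightarrow> 'p move" where
  "mv s0 s1 n = (if even n then s0 else s1) (play s0 s1 n)"

text \<open>Infinite plays have no winner.\<close>
definition wins :: "('p \<Rightarrow> nat) \<Rightarrow> nat \<Rightarrow> 'p strategy \<Rightarrow> 'p strategy \<Rightarrow> bool" where
  "wins ar p s0 s1 \<longleftrightarrow>
     (\<exists>n. (\<forall>m<n. mv s0 s1 m \<noteq> Challenge) \<and> mv s0 s1 n = Challenge \<and>
          (let pos = play s0 s1 n; \<delta> = last pos; d = length pos - 1 in
             if n mod 2 = p then \<not> consistent ar d \<delta> else consistent ar d \<delta>))"

definition winning_strategy0 :: "('p \<Rightarrow> nat) \<Rightarrow> 'p strategy \<Rightarrow> bool" where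
  "winning_strategy0 ar s0 \<longleftrightarrow> legal ar s0 \<and> (\<forall>s1. legal ar s1 \<longrightarrow> wins ar 0 s0 s1)"

definition winning_strategy1 :: "('p \<Rightarrow> nat) \<Rightarrow> 'p strategy \<Rightarrow> bool" where
  "winning_strategy1 ar s1 \<longleftrightarrow> legal ar s1 \<and> (\<forall>s0. legal ar s0 \<longrightarrow> wins ar 1 s0 s1)"

end

theory Submission
  imports Defs
begin

text \<open>A structure together with an assignment determines, for every depth, a unique
  well-formed constituent that it satisfies: its characteristic constituent.  Hence a
  satisfiable constituent is the characteristic constituent of some structure, and the
  characteristic constituent one level deeper is a satisfiable expansion of it.  The
  strategy ``select a consistent child if there is one, otherwise challenge'' therefore
  challenges only inconsistent constituents and only ever leaves consistent ones to the
  opponent (the root is consistent).  Played by either side, it never loses, so the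
  opponent has no winning strategy.\<close>

lemma finite_natoms: "finite (natoms (ar :: 'p::finite \<Rightarrow> nat) k)"
proof -
  have "natoms ar k \<subseteq> UNIV \<times> {xs. set xs \<subseteq> {..<k} \<and> length xs \<le> Max (range ar)}"
    unfolding natoms_def by (auto intro!: Max_ge)
  moreover have "finite ((UNIV :: 'p set) \<times> {xs. set xs \<subseteq> {..<k} \<and> length xs \<le> Max (range ar)})"
    by (intro finite_cartesian_product) (auto intro: finite_lists_length_le)
  ultimately show ?thesis
    by (rule finite_subset)
qed

lemma natoms_0 [simp]: "natoms ar 0 = {}"
  unfolding natoms_def by auto

lemma finite_fsets_subset: "finite F \<Longrightarrow> finite {S. fset S \<subseteq> F}"
  using finite_vimageI[of "Pow F" fset] by (simp add: vimage_def inj_def fset_inject)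

lemma finite_is_cst: "finite {c. is_cst (ar :: 'p::finite \<Rightarrow> nat) k d c}"
proof (induction d arbitrary: k)
  case 0
  have "{c. is_cst ar k 0 c} \<subseteq> (\<lambda>A. Cst A {||}) ` Pow (natoms ar k)"
    by (auto elim!: is_cst.elims)
  then show ?case
    using finite_natoms finite_subset by blast
next
  case (Suc d)
  let ?F = "{c. is_cst ar (Suc k) d c}"
  have "{c. is_cst ar k (Suc d) c} \<subseteq> case_prod Cst ` (Pow (natoms ar k) \<times> {S. fset S \<subseteq> ?F})"
  proof
    fix c
    assume "c \<in> {c. is_cst ar k (Suc d) c}"
    then show "c \<in> case_prod Cst ` (Pow (natoms ar k) \<times> {S. fset S \<subseteq> ?F})"
      by (cases c) (auto simp: image_iff)
  qed
  moreover have "finite (Pow (natoms ar k) \<times> {S. fset S \<subseteq> ?F})"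
    using finite_natoms finite_fsets_subset[OF Suc.IH[of "Suc k"]] by auto
  ultimately show ?case
    using finite_subset by blast
qed

lemma fset_Abs_fset_cst_image:
  fixes ar :: "'p::finite \<Rightarrow> nat"
  assumes "\<And>x. x \<in> D \<Longrightarrow> is_cst ar k d (f x)"
  shows "fset (Abs_fset (f ` D)) = f ` D"
proof -
  have "f ` D \<subseteq> {c. is_cst ar k d c}"
    using assms by blast
  then have "finite (f ` D)"
    using finite_is_cst finite_subset by blast
  then show ?thesis
    by (simp add: Abs_fset_inverse)
qed

definition true_atoms :: "('p \<Rightarrow> nat) \<Rightarrow> ('p \<Rightarrow> nat list \<Rightarrow> bool) \<Rightarrow> nat list \<Rightarrow> ('p \<times> nat list) set"
  where "true_atoms ar I vs = {(P, args) \<in> natoms ar (length vs). I P (map (\<lambda>i. vs ! i) args)}"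

fun char_cst :: "('p \<Rightarrow> nat) \<Rightarrow> nat set \<Rightarrow> ('p \<Rightarrow> nat list \<Rightarrow> bool) \<Rightarrow> nat list \<Rightarrow> nat \<Rightarrow> 'p cst"
  where
    "char_cst ar D I vs 0 = Cst (true_atoms ar I vs) {||}"
  | "char_cst ar D I vs (Suc d) =
      Cst (true_atoms ar I vs) (Abs_fset ((\<lambda>x. char_cst ar D I (vs @ [x]) d) ` D))"

lemma is_cst_char_cst: "is_cst (ar :: 'p::finite \<Rightarrow> nat) (length vs) d (char_cst ar D I vs d)"
proof (induction d arbitrary: vs)
  case 0
  then show ?case
    by (auto simp: true_atoms_def)
next
  case (Suc d)
  have children: "is_cst ar (Suc (length vs)) d (char_cst ar D I (vs @ [x]) d)" for x
    using Suc.IH[of "vs @ [x]"] by simp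
  have "fset (Abs_fset ((\<lambda>x. char_cst ar D I (vs @ [x]) d) ` D))
      = (\<lambda>x. char_cst ar D I (vs @ [x]) d) ` D"
    by (rule fset_Abs_fset_cst_image[where k = "Suc (length vs)" and d = d]) (rule children)
  then show ?case
    using children by (auto simp: true_atoms_def)
qed

lemma fset_char_cst_children:
  "fset (Abs_fset ((\<lambda>x. char_cst (ar :: 'p::finite \<Rightarrow> nat) D I (vs @ [x]) d) ` D))
    = (\<lambda>x. char_cst ar D I (vs @ [x]) d) ` D"
  using is_cst_char_cst[of ar "vs @ [_]" d D I]
  by (intro fset_Abs_fset_cst_image[where k = "Suc (length vs)" and d = d]) simp

lemma sat_char_cst: "sat (ar :: 'p::finite \<Rightarrow> nat) D I vs d (char_cst ar D I vs d)"
  by (induction d arbitrary: vs) (auto simp: true_atoms_def fset_char_cst_children)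

lemma char_cst_unique:
  fixes ar :: "'p::finite \<Rightarrow> nat"
  assumes "is_cst ar (length vs) d c" and "sat ar D I vs d c"
  shows "c = char_cst ar D I vs d"
  using assms
proof (induction d arbitrary: vs c)
  case 0
  then show ?case
    by (cases c) (auto simp: true_atoms_def)
next
  case (Suc d)
  obtain A S where c: "c = Cst A S"
    by (cases c)
  let ?children = "(\<lambda>x. char_cst ar D I (vs @ [x]) d) ` D"
  have A: "A = true_atoms ar I vs"
    using Suc.prems unfolding c true_atoms_def by auto
  have child: "c' = char_cst ar D I (vs @ [x]) d" if "c' |\<in>| S" "sat ar D I (vs @ [x]) d c'" for c' x
    using Suc.IH[of "vs @ [x]" c'] Suc.prems that unfolding c by simp
  have "fset S = ?children"
  proof
    show "fset S \<subseteq> ?children"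
      using Suc.prems child unfolding c by fastforce
    show "?children \<subseteq> fset S"
      using Suc.prems child unfolding c by fastforce
  qed
  then have "S = Abs_fset ?children"
    by (metis fset_inverse)
  then show ?case
    using A c by simp
qed

lemma trunc_char_cst: "trunc d (char_cst (ar :: 'p::finite \<Rightarrow> nat) D I vs (Suc d)) = char_cst ar D I vs d"
proof (induction d arbitrary: vs)
  case 0
  then show ?case
    by simp
next
  case (Suc d)
  have "fset (trunc d |`| Abs_fset ((\<lambda>x. char_cst ar D I (vs @ [x]) (Suc d)) ` D))
        = fset (Abs_fset ((\<lambda>x. char_cst ar D I (vs @ [x]) d) ` D))"
    by (simp add: fimage.rep_eq fset_char_cst_children image_image Suc.IH del: char_cst.simps)
  then have "trunc d |`| Abs_fset ((\<lambda>x. char_cst ar D I (vs @ [x]) (Suc d)) ` D)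
        = Abs_fset ((\<lambda>x. char_cst ar D I (vs @ [x]) d) ` D)"
    by (simp only: fset_inject)
  then show ?case
    by simp
qed

lemma consistent_expansion_exists:
  fixes ar :: "'p::finite \<Rightarrow> nat"
  assumes "\<delta> \<in> Delta ar d" and "consistent ar d \<delta>"
  shows "\<exists>c. c \<in> expand1 ar d \<delta> \<and> consistent ar (Suc d) c"
proof -
  obtain D :: "nat set" and I where "D \<noteq> {}" and sat: "sat ar D I [] d \<delta>"
    using assms(2) unfolding consistent_def by blast
  let ?c = "char_cst ar D I [] (Suc d)"
  have "is_cst ar (length ([] :: nat list)) d \<delta>"
    using assms(1) by (simp add: Delta_def)
  then have "\<delta> = char_cst ar D I [] d"
    using sat by (rule char_cst_unique)
  moreover have "?c \<in> Delta ar (Suc d)"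
    using is_cst_char_cst[of ar "[]" "Suc d" D I] by (simp add: Delta_def del: char_cst.simps)
  ultimately have "?c \<in> expand1 ar d \<delta>"
    using trunc_char_cst[of d ar D I "[]"] by (simp add: expand1_def del: char_cst.simps)
  moreover have "consistent ar (Suc d) ?c"
    unfolding consistent_def using \<open>D \<noteq> {}\<close> sat_char_cst[of ar D I "[]" "Suc d"] by blast
  ultimately show ?thesis
    by blast
qed

definition safe_strategy :: "('p \<Rightarrow> nat) \<Rightarrow> 'p strategy" where
  "safe_strategy ar pos =
    (let d = length pos - 1 in
     if \<exists>c. c \<in> expand1 ar d (last pos) \<and> consistent ar (Suc d) c
     then Select (SOME c. c \<in> expand1 ar d (last pos) \<and> consistent ar (Suc d) c)
     else Challenge)"

lemma safe_strategy_Select: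
  assumes "safe_strategy ar pos = Select c"
  shows "c \<in> expand1 ar (length pos - 1) (last pos) \<and> consistent ar (Suc (length pos - 1)) c"
  using assms someI_ex[of "\<lambda>c. c \<in> expand1 ar (length pos - 1) (last pos)
                                 \<and> consistent ar (Suc (length pos - 1)) c"]
  unfolding safe_strategy_def Let_def by (auto split: if_splits)

lemma legal_safe_strategy: "legal ar (safe_strategy ar)"
  unfolding legal_def using safe_strategy_Select by blast

lemma safe_strategy_Challenge:
  fixes ar :: "'p::finite \<Rightarrow> nat"
  assumes "safe_strategy ar pos = Challenge" and "last pos \<in> Delta ar (length pos - 1)"
  shows "\<not> consistent ar (length pos - 1) (last pos)"
  using assms consistent_expansion_exists[of "last pos" ar "length pos - 1"]
  unfolding safe_strategy_def Let_def by (auto split: if_splits)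

lemma play_Suc_mv:
  "play s0 s1 (Suc n) = (case mv s0 s1 n of Select c \<Rightarrow> play s0 s1 n @ [c] | Challenge \<Rightarrow> play s0 s1 n)"
  by (simp add: mv_def)

lemma play_nonempty: "play s0 s1 n \<noteq> []"
  by (induction n) (auto split: move.splits)

lemma last_play_in_Delta:
  assumes "legal ar s0" and "legal ar s1"
  shows "last (play s0 s1 n) \<in> Delta ar (length (play s0 s1 n) - 1)"
proof (induction n)
  case 0
  then show ?case
    by (simp add: top_cst_def Delta_def)
next
  case (Suc n)
  show ?case
  proof (cases "mv s0 s1 n")
    case (Select c)
    then have "c \<in> expand1 ar (length (play s0 s1 n) - 1) (last (play s0 s1 n))"
      using assms play_nonempty[of s0 s1 n] unfolding legal_def mv_def by (auto split: if_splits)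
    then show ?thesis
      using Select play_nonempty[of s0 s1 n] by (simp add: play_Suc_mv expand1_def del: play.simps)
  next
    case Challenge
    then show ?thesis
      using Suc by (simp add: play_Suc_mv del: play.simps)
  qed
qed

lemma consistent_top_cst: "consistent ar 0 top_cst"
  unfolding consistent_def top_cst_def by (rule exI[of _ "{0}"]) simp

lemma safe_strategy_never_loses:
  fixes ar :: "'p::finite \<Rightarrow> nat"
  assumes "legal ar s0" and "legal ar s1" and "p < 2"
    and safe: "(if p = 0 then s0 else s1) = safe_strategy ar"
  shows "\<not> wins ar (1 - p) s0 s1"
proof
  let ?pos = "play s0 s1"
  let ?C = "\<lambda>n. consistent ar (length (?pos n) - 1) (last (?pos n))"
  have mover: "(if even n then s0 else s1) = safe_strategy ar" if "n mod 2 = p" for n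
    using safe that by (auto simp: even_iff_mod_2_eq_zero)
  assume "wins ar (1 - p) s0 s1"
  then obtain n where before: "\<forall>m<n. mv s0 s1 m \<noteq> Challenge" and chal: "mv s0 s1 n = Challenge"
    and outcome: "if n mod 2 = 1 - p then \<not> ?C n else ?C n"
    unfolding wins_def Let_def by blast
  show False
  proof (cases "n mod 2 = p")
    case True
    then have "safe_strategy ar (?pos n) = Challenge"
      using chal mover[OF True] by (simp add: mv_def)
    then have "\<not> ?C n"
      using safe_strategy_Challenge last_play_in_Delta[OF assms(1,2)] by blast
    moreover have "n mod 2 \<noteq> 1 - p"
      using True \<open>p < 2\<close> by presburger
    then have "?C n"
      using outcome by simp
    ultimately show False
      by blast
  next
    case False
    then have "n mod 2 = 1 - p"
      using \<open>p < 2\<close> by auto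
    then have "\<not> ?C n"
      using outcome by simp
    moreover have "?C n"
    proof (cases n)
      case 0
      then show ?thesis
        by (simp add: consistent_top_cst)
    next
      case (Suc m)
      obtain c where c: "mv s0 s1 m = Select c"
        using before Suc by (cases "mv s0 s1 m") auto
      have "m mod 2 = p"
        using False Suc \<open>p < 2\<close> by presburger
      then have "safe_strategy ar (?pos m) = Select c"
        using c mover by (simp add: mv_def)
      then have "consistent ar (Suc (length (?pos m) - 1)) c"
        using safe_strategy_Select by blast
      then show ?thesis
        using Suc c play_nonempty[of s0 s1 m] by (simp add: play_Suc_mv del: play.simps)
    qed
    ultimately show False
      by blast
  qed
qed

theorem mainTheorem11:
  fixes ar :: "'p::finite \<Rightarrow> nat"
  assumes "\<forall>P. 0 < ar P"
  shows "\<not> (\<exists>s0. winning_strategy0 ar s0) \<and> \<not> (\<exists>s1. winning_strategy1 ar s1)"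
proof -
  have "\<not> wins ar 0 s0 (safe_strategy ar)" if "legal ar s0" for s0
    using safe_strategy_never_loses[of ar s0 "safe_strategy ar" 1] that by (simp add: legal_safe_strategy)
  moreover have "\<not> wins ar 1 (safe_strategy ar) s1" if "legal ar s1" for s1
    using safe_strategy_never_loses[of ar "safe_strategy ar" s1 0] that by (simp add: legal_safe_strategy)
  ultimately show ?thesis
    using legal_safe_strategy unfolding winning_strategy0_def winning_strategy1_def by blast
qed

end
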